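(* For all integers $n,k\ge 0$ we have $F_{n,k}\in\{0,1\}$; that is, $F$ is a $0$-$1$ matrix.
   Context: Define maps $G,S:\mathbb Z^2\to\mathbb Z^2$ by $G(x,y)=(x+y,y)$ and $S(x,y)=(3x-2y+1,\,2x-y+1)$. Define the array $(F_{n,k})_{n,k\ge 0}$ by $F_{0,0}=1$ and, for $(n,k)\neq(0,0)$, $F_{n,k}$ is the number of finite words $w=w_1w_2\cdots w_m$ ($m\ge 0$) over the alphabet $\{G,S\}$ with $w_1\circ w_2\circ\cdots\circ w_m(1,1)=(n,k)$ (the empty word acts as the identity). Equivalently: start with all entries $0$, set $F_{0,0}=1$ and $F_{1,1}=1$, and thereafter, whenever an entry $F_{n,k}$ with $n\ge 1$ changes its value, increase $F_{n+k,k}$ and $F_{3n+1-2k,\,2n+1-k}$ by $1$. *)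

theory Defs
  imports "HOL-Library.Extended_Nat"
begin

definition G_map :: "int \<times> int \<Rightarrow> int \<times> int" where
  "G_map p = (fst p + snd p, snd p)"

definition S_map :: "int \<times> int \<Rightarrow> int \<times> int" where
  "S_map p = (3 * fst p - 2 * snd p + 1, 2 * fst p - snd p + 1)"

text \<open>Words over the alphabet {G,S}: True stands for G, False for S.
  The word w1 w2 ... wm acts as the composition w1 o w2 o ... o wm.\<close>
definition letter :: "bool \<Rightarrow> int \<times> int \<Rightarrow> int \<times> int" where
  "letter b = (if b then G_map else S_map)"

definition word_act :: "bool list \<Rightarrow> int \<times> int \<Rightarrow> int \<times> int" where
  "word_act w = foldr (\<lambda>b f. letter b \<circ> f) w id"

definition F :: "nat \<Rightarrow> nat \<Rightarrow> enat" where
  "F n k = (if n = 0 \<and> k = 0 then 1 else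
     (let A = {w. word_act w (1, 1) = (int n, int k)} in
      if finite A then enat (card A) else \<infinity>))"

end

theory Submission
  imports Defs
begin

text \<open>Ping-pong argument. Both maps are injective and send the wedge
  \<open>1 \<le> y \<le> x\<close>, which contains (1,1), into itself. On the wedge, G lands in
  \<open>x \<ge> 2y\<close> and S lands in \<open>x - y < y\<close>; these images are disjoint and miss (1,1).
  So the value of a word at (1,1) determines its first letter (the map applied last),
  and by induction the whole word: each point is reached by at most one word.\<close>

lemma ping_pong_inj_foldr_comp:
  fixes f :: "'b \<Rightarrow> 'a \<Rightarrow> 'a"
  assumes maps_into: "\<And>b. f b ` D \<subseteq> D"
    and inj: "\<And>b. inj_on (f b) D"
    and disjoint: "\<And>b c. b \<noteq> c \<Longrightarrow> f b ` D \<inter> f c ` D = {}"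
    and p_in: "p \<in> D"
    and p_notin: "\<And>b. p \<notin> f b ` D"
  shows "inj (\<lambda>w. foldr (\<lambda>b g. f b \<circ> g) w id p)"
proof -
  define act where "act w = foldr (\<lambda>b g. f b \<circ> g) w id p" for w
  have act_Nil: "act [] = p" and act_Cons: "act (b # w) = f b (act w)" for b w
    by (simp_all add: act_def)
  have act_in: "act w \<in> D" for w
    using maps_into p_in by (induction w) (auto simp: act_Nil act_Cons)
  have "act v = act w \<Longrightarrow> v = w" for v w
  proof (induction v arbitrary: w)
    case Nil
    show ?case
    proof (cases w)
      case (Cons c u)
      then have "p = f c (act u)"
        using Nil.prems act_Nil act_Cons by simp
      then show ?thesis
        using act_in p_notin by blast
    qed simp
  next
    case (Cons b v)
    show ?case
    proof (cases w)
      case Nil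
      then have "p = f b (act v)"
        using Cons.prems act_Nil act_Cons by simp
      then show ?thesis
        using act_in p_notin by blast
    next
      case (Cons c u)
      with Cons.prems have eq: "f b (act v) = f c (act u)"
        by (simp add: act_Cons)
      then have "b = c"
        using disjoint act_in by blast
      with eq have "act v = act u"
        using inj act_in by (meson inj_onD)
      with \<open>b = c\<close> Cons Cons.IH show ?thesis
        by simp
    qed
  qed
  then show ?thesis
    unfolding act_def by (rule injI)
qed

definition wedge :: "(int \<times> int) set" where
  "wedge = {(x, y). 1 \<le> y \<and> y \<le> x}"

lemma letter_maps_wedge: "letter b ` wedge \<subseteq> wedge"
  by (auto simp: letter_def G_map_def S_map_def wedge_def)

lemma inj_letter: "inj (letter b)"
  by (auto simp: inj_def letter_def G_map_def S_map_def)

lemma letter_images_disjoint: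
  "b \<noteq> c \<Longrightarrow> letter b ` wedge \<inter> letter c ` wedge = {}"
  by (cases b; cases c) (auto simp: letter_def G_map_def S_map_def wedge_def)

lemma one_one_in_wedge: "(1, 1) \<in> wedge"
  by (simp add: wedge_def)

lemma one_one_notin_letter_image: "(1, 1) \<notin> letter b ` wedge"
  by (auto simp: letter_def G_map_def S_map_def wedge_def)

lemma inj_word_act_one_one: "inj (\<lambda>w. word_act w (1, 1))"
  unfolding word_act_def
  by (rule ping_pong_inj_foldr_comp[OF letter_maps_wedge inj_on_subset[OF inj_letter subset_UNIV]
        letter_images_disjoint one_one_in_wedge one_one_notin_letter_image])

theorem corollary5:
  shows "\<forall>n k. F n k \<in> {0, 1}"
proof (intro allI)
  fix n k
  let ?A = "(\<lambda>w. word_act w (1, 1)) -` {(int n, int k)}"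
  have "finite ?A"
    using inj_word_act_one_one by (simp add: finite_vimageI)
  moreover have "card ?A \<le> 1"
    using card_vimage_inj_on_le[OF inj_word_act_one_one, of "{(int n, int k)}"] by simp
  ultimately show "F n k \<in> {0, 1}"
    by (auto simp: F_def vimage_def le_Suc_eq zero_enat_def one_enat_def)
qed

end
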